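(* Fix $\ell\geq2$, let $A=\ell\times\omega$, and fix a recursive bijection $\psi:(\ell-1)\times\omega\times\omega\to\omega$. For $\alpha\in\{0,1\}^\omega$ define $S_\alpha$ on $A$ by: $S_\alpha(a,b)$ holds iff $a=(i,n)$, $b=(i+1,m)$ for some $i<\ell-1$ with $\alpha_{\psi(i,n,m)}=1$. Let $G$ be the set of $\alpha$ such that $\langle A,S_\alpha,\{0\}\times\omega,\ldots,\{\ell-1\}\times\omega\rangle$ is a model of $T_\ell$. Then $\lambda(G)=1$, i.e. with probability $1$ a sequence $\alpha$ defines a generic $\ell$-diagram.
   Context: $\lambda$ is the uniform (fair-coin product) probability measure on $\{0,1\}^\omega$, under which the bits $\alpha_i$ are independent and each equals $1$ with probability $1/2$. The signature has unary relations $L_0,\ldots,L_{\ell-1}$ and binary $S$. The theory $T_\ell$: (i) every $x$ satisfies some $L_j(x)$; (ii) no $x$ satisfies $L_i(x)\wedge L_j(x)$ for $i<j$; (iii) $S(x,y)$ and $L_i(x)$ with $i\le\ell-2$ imply $L_{i+1}(y)$; (iv) for each $i<\ell$ and all finite $X,Y\subseteq L_{i+1}$ with $X\cap Y=\emptyset$, $Z\subseteq L_i$, $X',Y'\subseteq L_{i-1}$ with $X'\cap Y'=\emptyset$ ($L_{-1},L_\ell$ read as empty), there is $z\in L_i\setminus Z$ with $S(z,x)$ for $x\in X$, $S(x',z)$ for $x'\in X'$, $\neg S(z,y)$ for $y\in Y$, $\neg S(y',z)$ for $y'\in Y'$. Countable models of $T_\ell$ are called generic $\ell$-diagrams. *)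

theory Defs
  imports "HOL-Probability.Probability"
begin

text \<open>The fair-coin product measure on infinite binary sequences; bit i of alpha
  is 1 iff alpha i = True.\<close>
definition coin_measure :: "(nat \<Rightarrow> bool) measure" where
  "coin_measure = PiM UNIV (\<lambda>_::nat. measure_pmf (bernoulli_pmf (1/2)))"

text \<open>Interpretation of L_k in a structure with universe M and unary predicates L;
  L_{-1} and L_l (and beyond) are read as empty.\<close>
definition layer :: "nat \<Rightarrow> 'a set \<Rightarrow> (nat \<Rightarrow> 'a set) \<Rightarrow> int \<Rightarrow> 'a set" where
  "layer l M L k = (if 0 \<le> k \<and> k < int l then M \<inter> L (nat k) else {})"

definition model_T :: "nat \<Rightarrow> 'a set \<Rightarrow> (nat \<Rightarrow> 'a set) \<Rightarrow> ('a \<Rightarrow> 'a \<Rightarrow> bool) \<Rightarrow> bool" where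
  "model_T l M L S \<longleftrightarrow>
     (\<forall>x\<in>M. \<exists>j<l. x \<in> L j) \<and>
     (\<forall>x\<in>M. \<forall>i j. i < j \<and> j < l \<longrightarrow> \<not> (x \<in> L i \<and> x \<in> L j)) \<and>
     (\<forall>x\<in>M. \<forall>y\<in>M. \<forall>i. i + 2 \<le> l \<and> S x y \<and> x \<in> L i \<longrightarrow> y \<in> L (i + 1)) \<and>
     (\<forall>i<l. \<forall>X Y Z X' Y'.
        finite X \<and> finite Y \<and> finite Z \<and> finite X' \<and> finite Y' \<and>
        X \<subseteq> layer l M L (int i + 1) \<and> Y \<subseteq> layer l M L (int i + 1) \<and> X \<inter> Y = {} \<and>
        Z \<subseteq> layer l M L (int i) \<and>
        X' \<subseteq> layer l M L (int i - 1) \<and> Y' \<subseteq> layer l M L (int i - 1) \<and> X' \<inter> Y' = {}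
        \<longrightarrow> (\<exists>z \<in> layer l M L (int i) - Z.
               (\<forall>x\<in>X. S z x) \<and> (\<forall>x'\<in>X'. S x' z) \<and>
               (\<forall>y\<in>Y. \<not> S z y) \<and> (\<forall>y'\<in>Y'. \<not> S y' z)))"

definition S_alpha :: "nat \<Rightarrow> (nat \<times> nat \<times> nat \<Rightarrow> nat) \<Rightarrow> (nat \<Rightarrow> bool)
     \<Rightarrow> nat \<times> nat \<Rightarrow> nat \<times> nat \<Rightarrow> bool" where
  "S_alpha l \<psi> \<alpha> a b \<longleftrightarrow>
     (\<exists>i n m. i + 1 < l \<and> a = (i, n) \<and> b = (i + 1, m) \<and> \<alpha> (\<psi> (i, n, m)))"

definition A_univ :: "nat \<Rightarrow> (nat \<times> nat) set" where
  "A_univ l = {..<l} \<times> UNIV"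

definition A_pred :: "nat \<Rightarrow> (nat \<times> nat) set" where
  "A_pred j = {j} \<times> UNIV"

end

theory Submission
  imports Defs
begin

(* Fix an instance of the extension axiom (iv) at layer i. The candidates z = (i, n), with n
   beyond the finite set Z, each work exactly when finitely many prescribed bits of alpha
   (those coding the edges from z to X, Y, X', Y') take prescribed values. As psi is injective,
   distinct candidates involve disjoint sets of bits, so these events are independent, each of
   probability at least 2^-c for c = |X u Y| + |X' u Y'|; hence almost surely some candidate
   works. There are only countably many instances, and axioms (i)-(iii) hold for every alpha. *)

lemma (in prob_space) AE_ex_not_in_indep_events:
  fixes E :: "nat \<Rightarrow> 'a set"
  assumes indep: "indep_events E UNIV" and le_q: "\<And>n. prob (E n) \<le> q" and "q < 1"
  shows "AE x in M. \<exists>n. x \<notin> E n"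
proof -
  have E_sets: "E n \<in> events" for n
    using indep by (auto simp: indep_events_def)
  have "0 \<le> q"
    using le_q[of 0] measure_nonneg order.trans by blast
  have bound: "prob (\<Inter>n. E n) \<le> q ^ Suc m" for m
  proof -
    have "prob (\<Inter>n. E n) \<le> prob (\<Inter>n\<in>{..m}. E n)"
      by (rule finite_measure_mono) (use E_sets in auto)
    also have "\<dots> = (\<Prod>n\<in>{..m}. prob (E n))"
      using indep by (auto simp: indep_events_def)
    also have "\<dots> \<le> (\<Prod>n\<in>{..m}. q)"
      by (intro prod_mono) (auto simp: le_q)
    finally show ?thesis by simp
  qed
  have "(\<lambda>m. q ^ Suc m) \<longlonglongrightarrow> 0"
    using LIMSEQ_realpow_zero[OF \<open>0 \<le> q\<close> \<open>q < 1\<close>] by (rule LIMSEQ_Suc)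
  then have "prob (\<Inter>n. E n) \<le> 0"
    by (rule tendsto_lowerbound) (use bound in \<open>simp_all del: power_Suc\<close>)
  then have "(\<Inter>n. E n) \<in> null_sets M"
    using E_sets by (auto simp: measure_le_0_iff emeasure_eq_measure)
  then show ?thesis
    by (rule AE_I') auto
qed

abbreviation fair_coin :: "bool measure" where
  "fair_coin \<equiv> measure_pmf (bernoulli_pmf (1/2))"

interpretation coin_bits: product_prob_space "\<lambda>_::nat. fair_coin" UNIV
  by unfold_locales

interpretation coin_measure: prob_space coin_measure
  unfolding coin_measure_def by unfold_locales

lemma space_coin_measure [simp]: "space coin_measure = UNIV"
  by (simp add: coin_measure_def space_PiM)

lemma measurable_coin_measure_bit: "(\<lambda>\<alpha>. \<alpha> k) \<in> coin_measure \<rightarrow>\<^sub>M fair_coin"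
  unfolding coin_measure_def by (rule measurable_component_singleton) simp

lemma pred_coin_measure_bit [measurable]: "Measurable.pred coin_measure (\<lambda>\<alpha>. \<alpha> k)"
  using measurable_coin_measure_bit by (simp add: measurable_def)

lemma indep_vars_coin_measure_bits:
  "coin_measure.indep_vars (\<lambda>_. fair_coin) (\<lambda>k \<alpha>. \<alpha> k) UNIV"
  by (subst coin_measure.indep_vars_iff_distr_eq_PiM)
    (simp_all add: measurable_coin_measure_bit,
     simp add: coin_measure_def coin_bits.PiM_component restrict_UNIV)

definition bit_pattern :: "nat set \<Rightarrow> nat set \<Rightarrow> (nat \<Rightarrow> bool) \<Rightarrow> bool" where
  "bit_pattern T F \<alpha> \<longleftrightarrow> (\<forall>k\<in>T. \<alpha> k) \<and> (\<forall>k\<in>F. \<not> \<alpha> k)"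

lemma pred_bit_pattern [measurable]:
  assumes "finite T" "finite F"
  shows "Measurable.pred coin_measure (bit_pattern T F)"
  unfolding bit_pattern_def using assms by measurable

lemma prob_coin_measure_bit_pattern:
  assumes "finite T" "finite F" "T \<inter> F = {}"
  shows "coin_measure.prob {\<alpha>. bit_pattern T F \<alpha>} = (1/2) ^ card (T \<union> F)"
proof -
  have "{\<alpha>. bit_pattern T F \<alpha>} =
      {\<alpha> \<in> space coin_measure. \<forall>k\<in>T \<union> F. \<alpha> k \<in> (if k \<in> T then {True} else {False})}"
    using assms(3) by (auto simp: bit_pattern_def)
  then have "emeasure coin_measure {\<alpha>. bit_pattern T F \<alpha>} =
      (\<Prod>k\<in>T \<union> F. emeasure fair_coin (if k \<in> T then {True} else {False}))"
    using assms(1,2) unfolding coin_measure_def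
    by (simp add: coin_bits.emeasure_PiM_Collect del: space_coin_measure)
  also have "\<dots> = (\<Prod>k\<in>T \<union> F. ennreal (1/2))"
    by (intro prod.cong) (simp_all add: emeasure_pmf_single)
  also have "\<dots> = ennreal ((1/2) ^ card (T \<union> F))"
    by (simp only: prod_constant) (rule ennreal_power, simp)
  finally show ?thesis
    by (simp add: coin_measure.emeasure_eq_measure)
qed

lemma indep_events_coin_measure_not_bit_pattern:
  fixes T F :: "'i \<Rightarrow> nat set"
  assumes "\<And>n. finite (T n)" "\<And>n. finite (F n)" "disjoint_family (\<lambda>n. T n \<union> F n)"
  shows "coin_measure.indep_events (\<lambda>n. {\<alpha>. \<not> bit_pattern (T n) (F n) \<alpha>}) UNIV"
proof -
  define K where "K = (\<lambda>n. T n \<union> F n)"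
  have "coin_measure.indep_vars (\<lambda>n. PiM (K n) (\<lambda>_. fair_coin)) (\<lambda>n \<alpha>. restrict \<alpha> (K n)) UNIV"
    using coin_measure.indep_vars_restrict[OF indep_vars_coin_measure_bits, of UNIV K] assms(3)
    by (simp add: K_def)
  moreover have "{y \<in> space (PiM (K n) (\<lambda>_. fair_coin)). \<not> bit_pattern (T n) (F n) y}
      \<in> sets (PiM (K n) (\<lambda>_. fair_coin))" for n
  proof -
    have "Measurable.pred (PiM (K n) (\<lambda>_. fair_coin)) (\<lambda>y. y k)" if "k \<in> K n" for k
      using measurable_component_singleton[OF that, of "\<lambda>_. fair_coin"] by (simp add: measurable_def)
    then show ?thesis
      using assms(1,2)[of n] unfolding bit_pattern_def pred_def[symmetric]
      by (intro pred_intros_logic pred_intros_finite) (auto simp: K_def)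
  qed
  ultimately have "coin_measure.indep_events
      (\<lambda>n. {\<alpha> \<in> space coin_measure. \<not> bit_pattern (T n) (F n) (restrict \<alpha> (K n))}) UNIV"
    by (rule coin_measure.indep_eventsI_indep_vars)
  moreover have "bit_pattern (T n) (F n) (restrict \<alpha> (K n)) \<longleftrightarrow> bit_pattern (T n) (F n) \<alpha>" for n \<alpha>
    by (simp add: bit_pattern_def K_def)
  ultimately show ?thesis
    by simp
qed

lemma AE_coin_measure_ex_bit_pattern:
  fixes T F :: "nat \<Rightarrow> nat set"
  assumes "\<And>n. finite (T n)" "\<And>n. finite (F n)" "\<And>n. T n \<inter> F n = {}"
    and "disjoint_family (\<lambda>n. T n \<union> F n)" and "\<And>n. card (T n \<union> F n) \<le> c"
  shows "AE \<alpha> in coin_measure. \<exists>n. bit_pattern (T n) (F n) \<alpha>"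
proof -
  have "coin_measure.prob {\<alpha>. \<not> bit_pattern (T n) (F n) \<alpha>} \<le> 1 - (1/2) ^ c" for n
  proof -
    have "{\<alpha>. bit_pattern (T n) (F n) \<alpha>} \<in> coin_measure.events"
      using pred_bit_pattern[OF assms(1,2)] by (simp add: pred_def)
    then have "coin_measure.prob {\<alpha>. \<not> bit_pattern (T n) (F n) \<alpha>} = 1 - (1/2) ^ card (T n \<union> F n)"
      using coin_measure.prob_compl[of "{\<alpha>. bit_pattern (T n) (F n) \<alpha>}"] assms(1-3)
      by (simp add: prob_coin_measure_bit_pattern Compl_eq_Diff_UNIV[symmetric] Collect_neg_eq)
    moreover have "((1::real)/2) ^ c \<le> (1/2) ^ card (T n \<union> F n)"
      using assms(5) by (intro power_decreasing) auto
    ultimately show ?thesis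
      by simp
  qed
  then show ?thesis
    using coin_measure.AE_ex_not_in_indep_events[OF
        indep_events_coin_measure_not_bit_pattern[OF assms(1,2,4)], of "1 - (1/2) ^ c"]
    by simp
qed

lemma AE_coin_measure_ex_bit_pattern_image:
  fixes P N :: "nat \<Rightarrow> 'e set"
  assumes inj: "inj_on f D" and "\<And>n. P n \<union> N n \<subseteq> D"
    and "\<And>n. finite (P n)" "\<And>n. finite (N n)" "\<And>n. P n \<inter> N n = {}"
    and "disjoint_family (\<lambda>n. P n \<union> N n)" and "\<And>n. card (P n \<union> N n) \<le> c"
  shows "AE \<alpha> in coin_measure. \<exists>n. bit_pattern (f ` P n) (f ` N n) \<alpha>"
proof (rule AE_coin_measure_ex_bit_pattern)
  have image_Int: "f ` A \<inter> f ` B = f ` (A \<inter> B)" if "A \<subseteq> D" "B \<subseteq> D" for A B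
    using inj_on_image_Int[OF inj that] by simp
  show "f ` P n \<inter> f ` N n = {}" for n
    using image_Int[of "P n" "N n"] assms(2,5) by auto
  show "disjoint_family (\<lambda>n. f ` P n \<union> f ` N n)"
    using image_Int assms(2,6) by (auto simp: disjoint_family_on_def simp flip: image_Un)
  show "card (f ` P n \<union> f ` N n) \<le> c" for n
    using card_image_le[of "P n \<union> N n" f] assms(3,4,7)[of n] by (simp add: image_Un)
qed (use assms in simp_all)

definition edges :: "nat \<Rightarrow> ((nat \<times> nat) \<times> (nat \<times> nat)) set" where
  "edges l = {(u, v). fst u + 1 < l \<and> fst v = fst u + 1}"

definition edge_index :: "(nat \<times> nat \<times> nat \<Rightarrow> nat) \<Rightarrow> (nat \<times> nat) \<times> (nat \<times> nat) \<Rightarrow> nat" where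
  "edge_index \<psi> e = \<psi> (fst (fst e), snd (fst e), snd (snd e))"

lemma S_alpha_Pair:
  "S_alpha l \<psi> \<alpha> (a, b) (c, d) \<longleftrightarrow> a + 1 < l \<and> c = a + 1 \<and> \<alpha> (\<psi> (a, b, d))"
  by (auto simp: S_alpha_def)

lemma S_alpha_iff_edge: "S_alpha l \<psi> \<alpha> u v \<longleftrightarrow> (u, v) \<in> edges l \<and> \<alpha> (edge_index \<psi> (u, v))"
  by (cases u, cases v) (simp add: S_alpha_Pair edges_def edge_index_def)

lemma pred_S_alpha [measurable]: "Measurable.pred coin_measure (\<lambda>\<alpha>. S_alpha l \<psi> \<alpha> u v)"
  unfolding S_alpha_iff_edge by measurable

lemma inj_on_edge_index:
  assumes "inj_on \<psi> ({..<l - 1} \<times> UNIV \<times> UNIV)"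
  shows "inj_on (edge_index \<psi>) (edges l)"
proof (rule inj_onI)
  fix e e' assume "e \<in> edges l" "e' \<in> edges l" and eq: "edge_index \<psi> e = edge_index \<psi> e'"
  obtain a b c d a' b' c' d' where e: "e = ((a, b), (c, d))" and e': "e' = ((a', b'), (c', d'))"
    by (metis prod.exhaust)
  have "a < l - 1" "a' < l - 1" "c = a + 1" "c' = a' + 1"
    using \<open>e \<in> edges l\<close> \<open>e' \<in> edges l\<close> by (auto simp: e e' edges_def)
  moreover have "\<psi> (a, b, d) = \<psi> (a', b', d')"
    using eq by (simp add: e e' edge_index_def)
  ultimately show "e = e'"
    using inj_onD[OF assms, of "(a, b, d)" "(a', b', d')"] by (simp add: e e')
qed

abbreviation A_layer :: "nat \<Rightarrow> int \<Rightarrow> (nat \<times> nat) set" where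
  "A_layer l k \<equiv> layer l (A_univ l) A_pred k"

lemma A_layer_eq: "A_layer l k = (if 0 \<le> k \<and> k < int l then {nat k} \<times> UNIV else {})"
  by (auto simp: layer_def A_univ_def A_pred_def)

definition extension_premise ::
    "nat \<Rightarrow> nat \<Rightarrow> (nat \<times> nat) set \<Rightarrow> (nat \<times> nat) set \<Rightarrow> (nat \<times> nat) set
      \<Rightarrow> (nat \<times> nat) set \<Rightarrow> (nat \<times> nat) set \<Rightarrow> bool" where
  "extension_premise l i X Y Z X' Y' \<longleftrightarrow>
     X \<subseteq> A_layer l (int i + 1) \<and> Y \<subseteq> A_layer l (int i + 1) \<and> X \<inter> Y = {} \<and>
     Z \<subseteq> A_layer l (int i) \<and>
     X' \<subseteq> A_layer l (int i - 1) \<and> Y' \<subseteq> A_layer l (int i - 1) \<and> X' \<inter> Y' = {}"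

definition extension_witnessed ::
    "nat \<Rightarrow> (nat \<times> nat \<times> nat \<Rightarrow> nat) \<Rightarrow> nat \<Rightarrow> (nat \<times> nat) set \<Rightarrow> (nat \<times> nat) set
      \<Rightarrow> (nat \<times> nat) set \<Rightarrow> (nat \<times> nat) set \<Rightarrow> (nat \<times> nat) set \<Rightarrow> (nat \<Rightarrow> bool) \<Rightarrow> bool" where
  "extension_witnessed l \<psi> i X Y Z X' Y' \<alpha> \<longleftrightarrow>
     (\<exists>z \<in> A_layer l (int i) - Z.
        (\<forall>x\<in>X. S_alpha l \<psi> \<alpha> z x) \<and> (\<forall>x'\<in>X'. S_alpha l \<psi> \<alpha> x' z) \<and>
        (\<forall>y\<in>Y. \<not> S_alpha l \<psi> \<alpha> z y) \<and> (\<forall>y'\<in>Y'. \<not> S_alpha l \<psi> \<alpha> y' z))"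

lemma pred_extension_witnessed [measurable]:
  "Measurable.pred coin_measure (extension_witnessed l \<psi> i X Y Z X' Y')"
  unfolding extension_witnessed_def by measurable

(* Quantifying over the countable set of finite sets, rather than over all sets, is what lets
   countable unions of null sets and of measurable sets be used below. *)
lemma model_T_S_alpha_iff:
  "model_T l (A_univ l) A_pred (S_alpha l \<psi> \<alpha>) \<longleftrightarrow>
    (\<forall>i<l. \<forall>X\<in>Collect finite. \<forall>Y\<in>Collect finite. \<forall>Z\<in>Collect finite.
      \<forall>X'\<in>Collect finite. \<forall>Y'\<in>Collect finite.
        extension_premise l i X Y Z X' Y' \<longrightarrow> extension_witnessed l \<psi> i X Y Z X' Y' \<alpha>)"
proof -
  have "\<forall>x\<in>A_univ l. \<exists>j<l. x \<in> A_pred j"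
    by (auto simp: A_univ_def A_pred_def)
  moreover have "\<forall>x\<in>A_univ l. \<forall>i j. i < j \<and> j < l \<longrightarrow> \<not> (x \<in> A_pred i \<and> x \<in> A_pred j)"
    by (auto simp: A_pred_def)
  moreover have "\<forall>x\<in>A_univ l. \<forall>y\<in>A_univ l. \<forall>i.
      i + 2 \<le> l \<and> S_alpha l \<psi> \<alpha> x y \<and> x \<in> A_pred i \<longrightarrow> y \<in> A_pred (i + 1)"
    by (auto simp: A_pred_def S_alpha_def)
  moreover have "(\<forall>i<l. \<forall>X Y Z X' Y'.
        finite X \<and> finite Y \<and> finite Z \<and> finite X' \<and> finite Y' \<and> extension_premise l i X Y Z X' Y'
          \<longrightarrow> extension_witnessed l \<psi> i X Y Z X' Y' \<alpha>) \<longleftrightarrow>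
    (\<forall>i<l. \<forall>X\<in>Collect finite. \<forall>Y\<in>Collect finite. \<forall>Z\<in>Collect finite.
      \<forall>X'\<in>Collect finite. \<forall>Y'\<in>Collect finite.
        extension_premise l i X Y Z X' Y' \<longrightarrow> extension_witnessed l \<psi> i X Y Z X' Y' \<alpha>)"
    by auto
  ultimately show ?thesis
    unfolding model_T_def extension_premise_def extension_witnessed_def by argo
qed

lemma pred_Ball_countable:
  assumes "countable I" "\<And>i. i \<in> I \<Longrightarrow> Measurable.pred M (\<lambda>x. P x i)"
  shows "Measurable.pred M (\<lambda>x. \<forall>i\<in>I. P x i)"
  using assms unfolding pred_def by (intro sets.sets_Collect_countable_All') auto

lemma sets_coin_measure_model_T:
  "{\<alpha>. model_T l (A_univ l) A_pred (S_alpha l \<psi> \<alpha>)} \<in> sets coin_measure"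
proof -
  have "Measurable.pred coin_measure (\<lambda>\<alpha>. model_T l (A_univ l) A_pred (S_alpha l \<psi> \<alpha>))"
    unfolding model_T_S_alpha_iff
    by (intro pred_intros_countable(1) pred_intros_imp' pred_Ball_countable
        countable_Collect_finite pred_extension_witnessed)
  then show ?thesis
    by (simp add: pred_def)
qed

lemma AE_extension_witnessed:
  assumes inj: "inj_on \<psi> ({..<l - 1} \<times> UNIV \<times> UNIV)" and "i < l"
    and fin: "finite X" "finite Y" "finite Z" "finite X'" "finite Y'"
    and prem: "extension_premise l i X Y Z X' Y'"
  shows "AE \<alpha> in coin_measure. extension_witnessed l \<psi> i X Y Z X' Y' \<alpha>"
proof -
  have above: "i + 1 < l \<and> fst x = i + 1" if "x \<in> X \<union> Y" for x
    using prem that by (auto simp: extension_premise_def A_layer_eq split: if_splits)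
  have below: "1 \<le> i \<and> fst x = i - 1" if "x \<in> X' \<union> Y'" for x
    using prem that by (auto simp: extension_premise_def A_layer_eq split: if_splits)
  obtain n0 where n0: "\<forall>n\<in>snd ` Z. n < n0"
    using fin(3) finite_nat_set_iff_bounded by blast
  define z where "z n = (i, n + n0)" for n
  have up_edge: "(z n, x) \<in> edges l" if "x \<in> X \<union> Y" for n x
    using above[OF that] by (simp add: edges_def z_def)
  have down_edge: "(x, z n) \<in> edges l" if "x \<in> X' \<union> Y'" for n x
    using below[OF that] \<open>i < l\<close> by (simp add: edges_def z_def)
  have z_notin: "z n \<notin> X \<union> Y \<union> X' \<union> Y'" for n
    using above below by (force simp: z_def)
  define P where "P n = Pair (z n) ` X \<union> (\<lambda>x. (x, z n)) ` X'" for n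
  define N where "N n = Pair (z n) ` Y \<union> (\<lambda>x. (x, z n)) ` Y'" for n
  have PN: "P n \<union> N n = Pair (z n) ` (X \<union> Y) \<union> (\<lambda>x. (x, z n)) ` (X' \<union> Y')" for n
    by (auto simp: P_def N_def)
  have edges: "P n \<union> N n \<subseteq> edges l" for n
    unfolding PN using up_edge down_edge by blast
  have "AE \<alpha> in coin_measure. \<exists>n. bit_pattern (edge_index \<psi> ` P n) (edge_index \<psi> ` N n) \<alpha>"
  proof (rule AE_coin_measure_ex_bit_pattern_image[OF inj_on_edge_index[OF inj] edges])
    show "finite (P n)" "finite (N n)" for n
      using fin by (simp_all add: P_def N_def)
    show "P n \<inter> N n = {}" for n
      using z_notin[of n] prem by (auto simp: P_def N_def extension_premise_def)
    show "disjoint_family (\<lambda>n. P n \<union> N n)"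
      unfolding disjoint_family_on_def PN using z_notin by (auto simp: z_def)
    show "card (P n \<union> N n) \<le> card (X \<union> Y) + card (X' \<union> Y')" for n
      unfolding PN by (rule order.trans[OF card_Un_le add_mono[OF card_image_le card_image_le]])
        (use fin in simp_all)
  qed
  then show ?thesis
  proof (rule eventually_mono)
    fix \<alpha> assume "\<exists>n. bit_pattern (edge_index \<psi> ` P n) (edge_index \<psi> ` N n) \<alpha>"
    then obtain n where n: "bit_pattern (edge_index \<psi> ` P n) (edge_index \<psi> ` N n) \<alpha>" ..
    have "z n \<in> A_layer l (int i) - Z"
      using n0 \<open>i < l\<close> by (auto simp: z_def A_layer_eq)
    with n edges[of n] show "extension_witnessed l \<psi> i X Y Z X' Y' \<alpha>"
      unfolding extension_witnessed_def
      by (intro bexI[of _ "z n"]) (auto simp: S_alpha_iff_edge bit_pattern_def P_def N_def)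
  qed
qed

theorem lemma3:
  fixes l :: nat and \<psi> :: "nat \<times> nat \<times> nat \<Rightarrow> nat"
  assumes "l \<ge> 2"
    and "bij_betw \<psi> ({..<l - 1} \<times> (UNIV :: nat set) \<times> (UNIV :: nat set)) (UNIV :: nat set)"
  defines "G \<equiv> {\<alpha> :: nat \<Rightarrow> bool. model_T l (A_univ l) A_pred (S_alpha l \<psi> \<alpha>)}"
  shows "G \<in> sets coin_measure \<and> emeasure coin_measure G = 1"
proof -
  have G_sets: "G \<in> sets coin_measure"
    unfolding G_def by (rule sets_coin_measure_model_T)
  have inj: "inj_on \<psi> ({..<l - 1} \<times> UNIV \<times> UNIV)"
    using assms(2) by (rule bij_betw_imp_inj_on)
  have "AE \<alpha> in coin_measure. \<forall>i<l. \<forall>X\<in>Collect finite. \<forall>Y\<in>Collect finite. \<forall>Z\<in>Collect finite.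
      \<forall>X'\<in>Collect finite. \<forall>Y'\<in>Collect finite.
        extension_premise l i X Y Z X' Y' \<longrightarrow> extension_witnessed l \<psi> i X Y Z X' Y' \<alpha>"
    unfolding AE_all_countable
    by (intro allI AE_impI AE_ball_countable' countable_Collect_finite AE_extension_witnessed[OF inj])
      auto
  then have "AE \<alpha> in coin_measure. \<alpha> \<in> G"
    unfolding G_def mem_Collect_eq model_T_S_alpha_iff .
  then have "emeasure coin_measure G = 1"
    using G_sets by (simp add: coin_measure.prob_eq_1 coin_measure.emeasure_eq_measure)
  with G_sets show ?thesis
    by simp
qed

end
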